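(* Let $K$ be a field of characteristic $\neq 2$ and $A\in K\setminus\{0\}$ a non-zero constant. Then $x^2+y^2+z^2=Axyz$ has a fundamental Markoff triple if and only if $K$ contains a square root $i$ of $-1$. Moreover, if $i\in K$, every fundamental Markoff triple has one of the forms $$(0,\varepsilon if,f)\qquad\text{or}\qquad\left(\tfrac{2a}{A},\,af+\varepsilon\tfrac{2ai}{A},\,f\right)$$ for some $f\in K[t]\setminus K$, $a\in\{\pm1\}$ and $\varepsilon\in\{\pm1\}$.
   Context: Solutions are triples $(x,y,z)\in K[t]^3$ with $x^2+y^2+z^2=Axyz$. The degree of the zero polynomial is $-\infty$. The height is $\max\{\deg x,\deg y,\deg z\}$. A Markoff triple is a solution with positive height and $\deg x\le\deg y\le\deg z$; it is fundamental if moreover $\deg y=\deg z$. *)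

theory Defs
  imports "HOL-Computational_Algebra.Polynomial" "HOL-Library.Extended_Real"
begin

definition pdeg :: "'a::zero poly \<Rightarrow> ereal" where
  "pdeg p = (if p = 0 then -\<infinity> else ereal (real (degree p)))"

definition is_solution :: "'k::comm_ring_1 \<Rightarrow> 'k poly \<Rightarrow> 'k poly \<Rightarrow> 'k poly \<Rightarrow> bool" where
  "is_solution A x y z \<longleftrightarrow> x^2 + y^2 + z^2 = smult A (x * y * z)"

definition height :: "'k::zero poly \<Rightarrow> 'k poly \<Rightarrow> 'k poly \<Rightarrow> ereal" where
  "height x y z = max (pdeg x) (max (pdeg y) (pdeg z))"

definition markoff_triple :: "'k::comm_ring_1 \<Rightarrow> 'k poly \<Rightarrow> 'k poly \<Rightarrow> 'k poly \<Rightarrow> bool" where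
  "markoff_triple A x y z \<longleftrightarrow> is_solution A x y z \<and> height x y z > 0
     \<and> pdeg x \<le> pdeg y \<and> pdeg y \<le> pdeg z"

definition fundamental_markoff_triple :: "'k::comm_ring_1 \<Rightarrow> 'k poly \<Rightarrow> 'k poly \<Rightarrow> 'k poly \<Rightarrow> bool" where
  "fundamental_markoff_triple A x y z \<longleftrightarrow> markoff_triple A x y z \<and> pdeg y = pdeg z"

end

theory Submission imports Defs begin

text \<open>If x = 0 the equation reads y^2 + z^2 = 0, which forces y = \<plusminus>i z for a square root i of -1.
  Otherwise comparing degrees makes x a nonzero constant c. With s = A c the quadratic form
  y^2 - s y z + z^2 is then the nonzero constant -c^2; it factors as (y - r z)(y - r\<inverse> z), where r is
  the ratio of the leading coefficients of y and z. Both factors are therefore constant, so is their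
  difference (r\<inverse> - r) z, which gives r = \<plusminus>1, s = 2r and y = r z + d with d^2 = -c^2.\<close>

lemma square_eq_neg_square_iff:
  fixes c d i :: "'a::idom"
  assumes "i^2 = -1"
  shows "d^2 = -(c^2) \<longleftrightarrow> d = i * c \<or> d = -(i * c)"
  using assms by (simp add: power2_eq_iff[symmetric] power_mult_distrib)

lemma square_eq_neg_square_imp_sqrt_neg_one:
  fixes c d :: "'a::field"
  assumes "d^2 = -(c^2)" and "c \<noteq> 0"
  shows "(d / c)^2 = -1"
  using assms by (simp add: power_divide)

lemma poly_square_eq_neg_square_imp_sqrt_neg_one:
  fixes y z :: "'a::field poly"
  assumes "y^2 = -(z^2)" and "z \<noteq> 0"
  shows "\<exists>i. i^2 = (-1::'a)"
proof -
  have "(lead_coeff y)^2 = -((lead_coeff z)^2)"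
    using arg_cong[OF assms(1), of lead_coeff] by (simp add: lead_coeff_power)
  with assms(2) show ?thesis
    using square_eq_neg_square_imp_sqrt_neg_one by fastforce
qed

lemma binary_quadratic_form_eq_const:
  fixes y z :: "'a::field poly"
  assumes eq: "y^2 + z^2 - smult s (y * z) = [:k:]" and k: "k \<noteq> 0"
    and deg: "degree y = degree z" "degree z \<ge> 1"
  shows "\<exists>r d. r^2 = 1 \<and> s = 2 * r \<and> y = smult r z + [:d:] \<and> d^2 = k"
proof -
  define n where "n = degree z"
  define r where "r = lead_coeff y / lead_coeff z"
  have y: "y \<noteq> 0" and z: "z \<noteq> 0" using deg by auto
  have "coeff [:k:] (2 * n) = 0" using deg(2) by (cases "2 * n") (auto simp: n_def)
  with eq have "coeff (y^2 + z^2 - smult s (y * z)) (2 * n) = 0" by simp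
  hence "(lead_coeff y)^2 + (lead_coeff z)^2 - s * (lead_coeff y * lead_coeff z) = 0"
    using coeff_mult_degree_sum[of y y] coeff_mult_degree_sum[of z z] coeff_mult_degree_sum[of y z]
    by (simp add: n_def deg(1) power2_eq_square mult_2)
  hence "r^2 + 1 = s * r"
    using z by (simp add: r_def field_simps power2_eq_square)
  moreover have r: "r \<noteq> 0" using y z by (simp add: r_def)
  ultimately have s: "s = r + inverse r"
    by (simp add: field_simps power2_eq_square)
  define u where "u = y - smult r z"
  define v where "v = y - smult (inverse r) z"
  have "u * v = y^2 + z^2 - smult s (y * z)"
    using r by (simp add: u_def v_def s algebra_simps power2_eq_square smult_add_left)
  with eq have uv: "u * v = [:k:]" by simp
  with k have "degree u + degree v = 0"
    by (metis degree_mult_eq degree_pCons_0 mult_zero_left mult_zero_right pCons_eq_0_iff)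
  hence "degree (smult (inverse r - r) z) = 0"
    using degree_diff_le[of u 0 v] by (simp add: u_def v_def algebra_simps smult_diff_left)
  hence "inverse r = r" using deg(2) by (auto split: if_splits)
  hence "u = v" by (simp add: u_def v_def)
  have r2: "r^2 = 1" using r \<open>inverse r = r\<close> by (metis power2_eq_square right_inverse)
  have "u^2 = [:k:]" using uv \<open>u = v\<close> by (simp add: power2_eq_square)
  moreover obtain d where d: "u = [:d:]"
    using \<open>degree u + degree v = 0\<close> by (metis add_is_0 degree_eq_zeroE)
  ultimately have "d^2 = k" by (simp add: power2_eq_square)
  moreover have "s = 2 * r" using s \<open>inverse r = r\<close> by simp
  moreover have "y = smult r z + [:d:]" using d by (simp add: u_def algebra_simps)
  ultimately show ?thesis using r2 by blast
qed

lemma fundamental_markoff_tripleD: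
  assumes "fundamental_markoff_triple A x y z"
  shows "is_solution A x y z" and "degree y = degree z" and "degree z \<ge> 1"
    and "x \<noteq> 0 \<Longrightarrow> degree x \<le> degree z"
proof -
  from assms have h: "height x y z > 0" and xy: "pdeg x \<le> pdeg y" and yz: "pdeg y = pdeg z"
    unfolding fundamental_markoff_triple_def markoff_triple_def by auto
  have "height x y z = pdeg z" using xy yz unfolding height_def by (simp add: max_def)
  with h show dz: "degree z \<ge> 1" unfolding pdeg_def by (auto split: if_splits)
  with yz show "degree y = degree z" unfolding pdeg_def by (auto split: if_splits)
  show "x \<noteq> 0 \<Longrightarrow> degree x \<le> degree z"
    using xy yz dz unfolding pdeg_def by (auto split: if_splits)
  show "is_solution A x y z" using assms
    unfolding fundamental_markoff_triple_def markoff_triple_def by simp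
qed

lemma markoff_solution_first_constant:
  fixes A :: "'a::field"
  assumes s: "is_solution A x y z" and A: "A \<noteq> 0" and nz: "x \<noteq> 0" "y \<noteq> 0" "z \<noteq> 0"
    and deg: "degree x \<le> degree z" "degree y = degree z"
  shows "degree x = 0"
proof -
  have "degree (x^2 + y^2 + z^2) \<le> 2 * degree z"
    using deg by (intro degree_add_le) (auto intro: order.trans[OF degree_power_le])
  moreover have "degree (smult A (x * y * z)) = degree x + 2 * degree z"
    using A nz deg by (simp add: degree_mult_eq)
  ultimately show ?thesis using s unfolding is_solution_def by simp
qed

lemma fundamental_markoff_triple_cases:
  fixes A :: "'a::field"
  assumes fm: "fundamental_markoff_triple A x y z" and A: "A \<noteq> 0"
  obtains "x = 0" "y^2 = -(z^2)"
  | r d where "r^2 = 1" "x = [:2 * r / A:]" "x \<noteq> 0" "y = smult r z + [:d:]"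
      "d^2 = -((2 * r / A)^2)"
proof (cases "x = 0")
  case True
  with fundamental_markoff_tripleD(1)[OF fm] have "y^2 = -(z^2)"
    unfolding is_solution_def by (simp add: eq_neg_iff_add_eq_0)
  with True that(1) show ?thesis by blast
next
  case False
  note D = fundamental_markoff_tripleD[OF fm]
  have "y \<noteq> 0" "z \<noteq> 0" using D(2,3) by auto
  have "degree x = 0"
    using markoff_solution_first_constant[OF D(1) A False \<open>y \<noteq> 0\<close> \<open>z \<noteq> 0\<close> D(4)[OF False] D(2)] .
  then obtain c where x: "x = [:c:]" by (metis degree_eq_zeroE)
  with False have c: "c \<noteq> 0" by simp
  have "y^2 + z^2 - smult (A * c) (y * z) = [:-(c^2):]"
    using D(1) unfolding is_solution_def x
    by (simp add: algebra_simps power2_eq_square flip: eq_diff_eq)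
  then obtain r d where "r^2 = 1" "A * c = 2 * r" "y = smult r z + [:d:]" "d^2 = -(c^2)"
    using binary_quadratic_form_eq_const D(2,3) c by (metis neg_equal_0_iff_equal power_eq_0_iff)
  moreover from this(2) A have "c = 2 * r / A" by (simp add: field_simps)
  ultimately show ?thesis using that(2) x False by simp
qed

lemma fundamental_markoff_triple_example:
  fixes A i :: "'a::field"
  assumes "i^2 = -1"
  shows "fundamental_markoff_triple A 0 (smult i [:0, 1:]) [:0, 1:]"
proof -
  have "i \<noteq> 0" using assms by auto
  moreover have "(smult i [:0, 1:])^2 + [:0, 1:]^2 = (0::'a poly)"
    using assms by (simp add: power2_eq_square)
  ultimately show ?thesis
    unfolding fundamental_markoff_triple_def markoff_triple_def is_solution_def height_def pdeg_def
    by simp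
qed

lemma fundamental_markoff_triple_imp_sqrt_neg_one:
  fixes A :: "'a::field"
  assumes fm: "fundamental_markoff_triple A x y z" and A: "A \<noteq> 0"
  shows "\<exists>i. i^2 = (-1::'a)"
proof -
  have "z \<noteq> 0" using fundamental_markoff_tripleD(3)[OF fm] by auto
  then show ?thesis
    using fundamental_markoff_triple_cases[OF fm A] poly_square_eq_neg_square_imp_sqrt_neg_one
      square_eq_neg_square_imp_sqrt_neg_one by (metis pCons_eq_0_iff)
qed

lemma fundamental_markoff_triple_normal_form:
  fixes A i :: "'a::field"
  assumes fm: "fundamental_markoff_triple A x y z" and A: "A \<noteq> 0" and i: "i^2 = -1"
  shows "\<exists>f a \<epsilon>. degree f \<ge> 1 \<and> a \<in> {1, -1} \<and> \<epsilon> \<in> {1, -1} \<and>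
           ((x = 0 \<and> y = smult (\<epsilon> * i) f \<and> z = f) \<or>
            (x = [:2 * a / A:] \<and> y = smult a f + [:\<epsilon> * 2 * a * i / A:] \<and> z = f))"
  using fundamental_markoff_triple_cases[OF fm A]
proof cases
  case 1
  have "[:i:]^2 = (-1 :: 'a poly)" using i by (simp add: power2_eq_square flip: pCons_one)
  with 1 have "y = smult i z \<or> y = smult (-i) z"
    using square_eq_neg_square_iff[of "[:i:]" y z] by auto
  with 1 fundamental_markoff_tripleD(3)[OF fm] show ?thesis
    by (metis insertCI mult_1 mult_minus_left)
next
  case (2 r d)
  with square_eq_neg_square_iff[OF i] have "d = i * (2 * r / A) \<or> d = -(i * (2 * r / A))"
    by simp
  then obtain \<epsilon> :: 'a where "\<epsilon> \<in> {1, -1}" "d = \<epsilon> * 2 * r * i / A"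
  proof (elim disjE)
    assume "d = i * (2 * r / A)"
    then show ?thesis by (intro that[of 1]) (auto simp: algebra_simps)
  next
    assume "d = -(i * (2 * r / A))"
    then show ?thesis by (intro that[of "-1"]) (auto simp: algebra_simps)
  qed
  with 2 fundamental_markoff_tripleD(3)[OF fm] show ?thesis
    by (intro exI[of _ z] exI[of _ r] exI[of _ \<epsilon>]) (auto simp: power2_eq_1_iff)
qed

theorem lemma2p4:
  fixes A :: "'k::field"
  assumes char: "(2::'k) \<noteq> 0"
    and A: "A \<noteq> 0"
  shows "((\<exists>x y z. fundamental_markoff_triple A x y z) \<longleftrightarrow> (\<exists>i::'k. i^2 = -1))
    \<and> (\<forall>i::'k. i^2 = -1 \<longrightarrow>
         (\<forall>x y z. fundamental_markoff_triple A x y z \<longrightarrow>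
            (\<exists>f a \<epsilon>. degree f \<ge> 1 \<and> a \<in> {1, -1} \<and> \<epsilon> \<in> {1, -1} \<and>
               ((x = 0 \<and> y = smult (\<epsilon> * i) f \<and> z = f) \<or>
                (x = [:2 * a / A:] \<and> y = smult a f + [:\<epsilon> * 2 * a * i / A:] \<and> z = f)))))"
  using fundamental_markoff_triple_imp_sqrt_neg_one[OF _ A] fundamental_markoff_triple_example
    fundamental_markoff_triple_normal_form[OF _ A]
  by blast

end
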